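(* Let $K\subset\hat{\mathbb{C}}$ be a compactum and $h: K\rightarrow\hat{\mathbb{C}}$ an embedding. Then $h(d)\in\mathcal{D}_{h(K)}^{PS}$ for every $d\in\mathcal{D}_K^{PS}$. Therefore the Peano models $\mathcal{D}_K^{PS}$ and $\mathcal{D}_{h(K)}^{PS}$ (with quotient topologies) are homeomorphic.
   Context: A compactum is a compact metric space. A Peano space is a compactum having at most countably many non-degenerate components, each locally connected, such that for every $C>0$ at most finitely many of them have diameter greater than $C$. A monotone decomposition of a compactum $K$ is an (upper semicontinuous) partition of $K$ into subcontinua, with the quotient topology on the hyperspace. For a compactum $K\subset\hat{\mathbb{C}}$, $\mathcal{D}_K^{PS}$ denotes the unique monotone decomposition of $K$ with Peano hyperspace that is finer than every other such decomposition (its existence is known); the hyperspace $\mathcal{D}_K^{PS}$ with the quotient topology is called the Peano model of $K$. *)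

theory Defs
  imports "HOL-Analysis.Analysis"
begin

definition riemann_sphere :: "(real^3) set" where
  "riemann_sphere = sphere 0 1"

definition mdiam :: "'a metric \<Rightarrow> 'a set \<Rightarrow> real" where
  "mdiam m S = (SUP x\<in>S. SUP y\<in>S. mdist m x y)"

definition peano_space :: "'a topology \<Rightarrow> bool" where
  "peano_space X \<longleftrightarrow>
     compact_space X \<and>
     (\<exists>m. X = mtopology_of m \<and>
        (\<forall>C>0. finite {c \<in> connected_components_of X. \<not> (\<exists>x. c = {x}) \<and> mdiam m c > C})) \<and>
     countable {c \<in> connected_components_of X. \<not> (\<exists>x. c = {x})} \<and>
     (\<forall>c \<in> connected_components_of X. \<not> (\<exists>x. c = {x}) \<longrightarrow> locally_connected_space (subtopology X c))"

text \<open>Monotone decomposition of a compactum K: an upper semicontinuous partition of K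
  into subcontinua (nonempty compact connected sets).\<close>
definition monotone_decomp :: "'a::metric_space set \<Rightarrow> 'a set set \<Rightarrow> bool" where
  "monotone_decomp K D \<longleftrightarrow>
     \<Union>D = K \<and>
     (\<forall>d\<in>D. d \<noteq> {} \<and> compact d \<and> connected d) \<and>
     (\<forall>d\<in>D. \<forall>e\<in>D. d \<noteq> e \<longrightarrow> d \<inter> e = {}) \<and>
     (\<forall>U. openin (top_of_set K) U \<longrightarrow> openin (top_of_set K) (\<Union>{d\<in>D. d \<subseteq> U}))"

text \<open>The hyperspace D with the quotient topology: a family of elements is open
  iff its union is (relatively) open in K.\<close>
definition decomp_topology :: "'a::topological_space set \<Rightarrow> 'a set set \<Rightarrow> 'a set topology" where
  "decomp_topology K D = topology (\<lambda>V. V \<subseteq> D \<and> openin (top_of_set K) (\<Union>V))"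

definition finer_decomp :: "'a set set \<Rightarrow> 'a set set \<Rightarrow> bool" where
  "finer_decomp D E \<longleftrightarrow> (\<forall>d\<in>D. \<exists>e\<in>E. d \<subseteq> e)"

definition is_PS_decomp :: "'a::metric_space set \<Rightarrow> 'a set set \<Rightarrow> bool" where
  "is_PS_decomp K D \<longleftrightarrow>
     monotone_decomp K D \<and> peano_space (decomp_topology K D) \<and>
     (\<forall>E. monotone_decomp K E \<and> peano_space (decomp_topology K E) \<longrightarrow> finer_decomp D E)"

end

theory Submission
  imports Defs
begin

text \<open>An embedding of a compactum is a homeomorphism onto its image, and every notion
  involved is invariant under homeomorphisms: images of monotone decompositions are monotone
  decompositions with homeomorphic hyperspaces, and being a Peano space is a topological property
  (the diameter condition survives because a compatible metric can be pulled back along the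
  homeomorphism). Hence the image of the finest monotone decomposition of K with Peano hyperspace
  has the same minimality property in h(K), and two such decompositions coincide because two
  partitions refining each other are equal.\<close>

definition nondegenerate_components_of :: "'a topology \<Rightarrow> 'a set set" where
  "nondegenerate_components_of X = {c \<in> connected_components_of X. \<nexists>x. c = {x}}"

lemma peano_space_iff:
  "peano_space X \<longleftrightarrow>
     compact_space X \<and>
     (\<exists>m. X = mtopology_of m \<and>
        (\<forall>C>0. finite {c \<in> nondegenerate_components_of X. mdiam m c > C})) \<and>
     countable (nondegenerate_components_of X) \<and>
     (\<forall>c \<in> nondegenerate_components_of X. locally_connected_space (subtopology X c))"
proof -
  have restrict: "{c \<in> {c \<in> A. P c}. Q c} = {c \<in> A. P c \<and> Q c}" for A :: "'a set set" and P Q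
    by blast
  have ball: "(\<forall>c \<in> {c \<in> A. P c}. Q c) \<longleftrightarrow> (\<forall>c \<in> A. P c \<longrightarrow> Q c)" for A :: "'a set set" and P Q
    by blast
  show ?thesis
    unfolding peano_space_def nondegenerate_components_of_def restrict ball ..
qed

lemma inj_on_image_singleton_iff:
  assumes "inj_on f A"
  shows "(\<exists>y. f ` A = {y}) \<longleftrightarrow> (\<exists>x. A = {x})"
  using assms by (metis card_1_singleton_iff card_image)

lemma nondegenerate_components_of_homeomorphic_map:
  assumes "homeomorphic_map X Y f"
  shows "nondegenerate_components_of Y = image f ` nondegenerate_components_of X"
proof -
  have degenerate_iff: "(\<exists>y. f ` c = {y}) \<longleftrightarrow> (\<exists>x. c = {x})"
    if "c \<in> connected_components_of X" for c
    using that assms connected_components_of_subset homeomorphic_imp_injective_map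
    by (metis inj_on_image_singleton_iff inj_on_subset)
  have "nondegenerate_components_of Y =
        image f ` {c \<in> connected_components_of X. \<nexists>y. f ` c = {y}}"
    unfolding nondegenerate_components_of_def homeomorphic_map_connected_components_of[OF assms]
    by blast
  also have "\<dots> = image f ` nondegenerate_components_of X"
    unfolding nondegenerate_components_of_def by (simp add: degenerate_iff cong: conj_cong)
  finally show ?thesis .
qed

lemma mdiam_image_isometric:
  assumes "\<And>x y. x \<in> S \<Longrightarrow> y \<in> S \<Longrightarrow> mdist m' (f x) (f y) = mdist m x y"
  shows "mdiam m' (f ` S) = mdiam m S"
  unfolding mdiam_def image_image using assms by (simp cong: SUP_cong)

lemma mtopology_of_pullback_metric:
  assumes g: "homeomorphic_map Y (mtopology_of m) g"
  defines "m' \<equiv> metric (topspace Y, \<lambda>a b. mdist m (g a) (g b))"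
  shows "Y = mtopology_of m'" and "mdist m' a b = mdist m (g a) (g b)"
proof -
  have inj: "inj_on g (topspace Y)" and onto: "g ` topspace Y = mspace m"
    using homeomorphic_imp_injective_map homeomorphic_imp_surjective_map g by fastforce+
  interpret Y: Metric_space "topspace Y" "\<lambda>a b. mdist m (g a) (g b)"
  proof
    show "mdist m (g x) (g y) = 0 \<longleftrightarrow> x = y" if "x \<in> topspace Y" "y \<in> topspace Y" for x y
    proof -
      have "g x \<in> mspace m" "g y \<in> mspace m"
        using that onto by auto
      then show ?thesis
        using that inj by (simp add: inj_on_eq_iff)
    qed
    show "mdist m (g x) (g z) \<le> mdist m (g x) (g y) + mdist m (g y) (g z)"
      if "x \<in> topspace Y" "y \<in> topspace Y" "z \<in> topspace Y" for x y z
      using that onto by (auto intro: mdist_triangle)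
  qed (auto simp: mdist_commute)
  interpret Metric_space12 "topspace Y" "\<lambda>a b. mdist m (g a) (g b)" "mspace m" "mdist m"
    by (intro Metric_space12.intro Y.Metric_space_axioms Metric_space_mspace_mdist)
  have g': "homeomorphic_map Y.mtopology (mtopology_of m) g"
    unfolding mtopology_of_def using onto by (rule isometry_imp_homeomorphic_map) simp
  have "openin Y S \<longleftrightarrow> openin Y.mtopology S" for S
    unfolding homeomorphic_map_openness_eq[OF g] homeomorphic_map_openness_eq[OF g'] by simp
  then have "Y = Y.mtopology"
    by (simp add: topology_eq)
  then show "Y = mtopology_of m'"
    by (simp add: m'_def)
  show "mdist m' a b = mdist m (g a) (g b)"
    by (simp add: m'_def)
qed

lemma peano_space_homeomorphic:
  assumes X: "peano_space X" and XY: "X homeomorphic_space Y"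
  shows "peano_space Y"
proof -
  obtain f g where fg: "homeomorphic_maps X Y f g"
    using XY homeomorphic_space_def by blast
  then have f: "homeomorphic_map X Y f" and g: "homeomorphic_map Y X g"
    using homeomorphic_maps_map by blast+
  have gf: "g (f x) = x" if "x \<in> topspace X" for x
    using fg that by (simp add: homeomorphic_maps_def)
  obtain m where Xm: "X = mtopology_of m"
    and fin: "\<And>C. C > 0 \<Longrightarrow> finite {c \<in> nondegenerate_components_of X. mdiam m c > C}"
    using X peano_space_iff by blast
  have gm: "homeomorphic_map Y (mtopology_of m) g"
    using g Xm by simp
  define m' where "m' = metric (topspace Y, \<lambda>a b. mdist m (g a) (g b))"
  have Ym': "Y = mtopology_of m'" and dist': "\<And>a b. mdist m' a b = mdist m (g a) (g b)"
    unfolding m'_def by (fact mtopology_of_pullback_metric[OF gm])+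
  have NY: "nondegenerate_components_of Y = image f ` nondegenerate_components_of X"
    using nondegenerate_components_of_homeomorphic_map[OF f] .
  have sub: "c \<subseteq> topspace X" if "c \<in> nondegenerate_components_of X" for c
    using that connected_components_of_subset by (auto simp: nondegenerate_components_of_def)
  have diam: "mdiam m' (f ` c) = mdiam m c" if "c \<in> nondegenerate_components_of X" for c
    using sub[OF that] by (intro mdiam_image_isometric) (auto simp: dist' gf subsetD)
  have fin': "finite {c \<in> nondegenerate_components_of Y. mdiam m' c > C}" if "C > 0" for C
  proof -
    have "{c \<in> nondegenerate_components_of Y. mdiam m' c > C}
          = image f ` {c \<in> nondegenerate_components_of X. mdiam m' (f ` c) > C}"
      unfolding NY by blast
    also have "\<dots> = image f ` {c \<in> nondegenerate_components_of X. mdiam m c > C}"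
      using diam by (simp cong: conj_cong)
    finally show ?thesis
      using fin[OF that] by simp
  qed
  have lc': "locally_connected_space (subtopology Y c)"
    if cY: "c \<in> nondegenerate_components_of Y" for c
  proof -
    obtain c0 where c0: "c0 \<in> nondegenerate_components_of X" and c: "c = f ` c0"
      using cY unfolding NY by blast
    have "homeomorphic_map (subtopology X c0) (subtopology Y c) f"
      using f sub[OF c0] homeomorphic_imp_surjective_map[OF f] unfolding c
      by (intro homeomorphic_map_subtopologies) auto
    moreover have "locally_connected_space (subtopology X c0)"
      using X c0 unfolding peano_space_iff by blast
    ultimately show ?thesis
      using homeomorphic_locally_connected_space homeomorphic_map_imp_homeomorphic_space by blast
  qed
  have "countable (nondegenerate_components_of Y)"
    using X unfolding NY peano_space_iff by simp
  moreover have "compact_space Y"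
    using X homeomorphic_compact_space[OF XY] unfolding peano_space_iff by simp
  ultimately show ?thesis
    unfolding peano_space_iff using Ym' fin' lc' by blast
qed

lemma monotone_decompD:
  assumes "monotone_decomp K D"
  shows "\<Union>D = K" and "disjoint D" and "\<And>d. d \<in> D \<Longrightarrow> d \<noteq> {} \<and> compact d \<and> connected d"
    and "\<And>U. openin (top_of_set K) U \<Longrightarrow> openin (top_of_set K) (\<Union>{d \<in> D. d \<subseteq> U})"
  using assms unfolding monotone_decomp_def disjoint_def by simp_all

lemma openin_decomp_topology:
  assumes "disjoint D"
  shows "openin (decomp_topology K D) V \<longleftrightarrow> V \<subseteq> D \<and> openin (top_of_set K) (\<Union>V)"
proof -
  have "istopology (\<lambda>V. V \<subseteq> D \<and> openin (top_of_set K) (\<Union>V))"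
    unfolding istopology_def
  proof (rule conjI; intro allI impI)
    fix V W
    assume V: "V \<subseteq> D \<and> openin (top_of_set K) (\<Union>V)"
      and W: "W \<subseteq> D \<and> openin (top_of_set K) (\<Union>W)"
    have "\<Union>V \<inter> \<Union>W \<subseteq> \<Union>(V \<inter> W)"
    proof
      fix x
      assume "x \<in> \<Union>V \<inter> \<Union>W"
      then obtain a b where ab: "a \<in> V" "b \<in> W" "x \<in> a" "x \<in> b"
        by blast
      then have "a = b"
        using assms V W unfolding disjoint_def by blast
      then show "x \<in> \<Union>(V \<inter> W)"
        using ab by blast
    qed
    then have "\<Union>(V \<inter> W) = \<Union>V \<inter> \<Union>W"
      by blast
    then show "V \<inter> W \<subseteq> D \<and> openin (top_of_set K) (\<Union>(V \<inter> W))"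
      using V W by auto
  next
    fix F
    assume F: "\<forall>V\<in>F. V \<subseteq> D \<and> openin (top_of_set K) (\<Union>V)"
    have "\<Union>(\<Union>F) = \<Union>(Union ` F)"
      by blast
    moreover have "openin (top_of_set K) (\<Union>(Union ` F))"
      using F by (intro openin_Union) auto
    ultimately show "\<Union>F \<subseteq> D \<and> openin (top_of_set K) (\<Union>(\<Union>F))"
      using F by auto
  qed
  then show ?thesis
    unfolding decomp_topology_def by simp
qed

lemma topspace_decomp_topology:
  assumes "disjoint D" and "\<Union>D = K"
  shows "topspace (decomp_topology K D) = D"
proof -
  have "openin (decomp_topology K D) D"
    using assms by (simp add: openin_decomp_topology)
  then show ?thesis
    using openin_decomp_topology[OF assms(1)] by (metis openin_subset openin_topspace subset_antisym)
qed

lemma image_image_homeomorphism_cancel: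
  assumes "homeomorphism K T h g" and "A \<subseteq> K"
  shows "g ` h ` A = A"
proof -
  have "\<forall>x\<in>A. g (h x) = x"
    using assms homeomorphism_apply1 by blast
  then show ?thesis
    by (simp add: image_image)
qed

lemma partition_image_homeomorphism:
  assumes hom: "homeomorphism K T h g" and D: "\<Union>D = K" "disjoint D"
  shows "\<Union>(image h ` D) = T" and "disjoint (image h ` D)"
proof -
  have "\<Union>(image h ` D) = h ` K"
    using D(1) by blast
  then show "\<Union>(image h ` D) = T"
    using hom by (simp add: homeomorphism_def)
  have "inj_on h (\<Union>D)"
    by (rule inj_on_inverseI[where g = g]) (use D(1) homeomorphism_apply1[OF hom] in blast)
  then show "disjoint (image h ` D)"
    using D(2) by (rule disjoint_image)
qed

lemma continuous_map_decomp_topology_image: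
  assumes hom: "homeomorphism K T h g" and D: "\<Union>D = K" "disjoint D"
  shows "continuous_map (decomp_topology K D) (decomp_topology T (image h ` D)) (image h)"
proof -
  note hD = partition_image_homeomorphism[OF hom D]
  have "openin (decomp_topology K D) {d \<in> D. h ` d \<in> U}"
    if U: "openin (decomp_topology T (image h ` D)) U" for U
  proof -
    have UhD: "U \<subseteq> image h ` D" and UT: "openin (top_of_set T) (\<Union>U)"
      using U openin_decomp_topology[OF hD(2)] by blast+
    have gh: "g ` h ` d = d" if "d \<in> D" for d
      using that D(1) by (intro image_image_homeomorphism_cancel[OF hom]) blast
    have "\<Union>{d \<in> D. h ` d \<in> U} = g ` \<Union>U"
    proof
      show "\<Union>{d \<in> D. h ` d \<in> U} \<subseteq> g ` \<Union>U"
        using gh by blast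
      show "g ` \<Union>U \<subseteq> \<Union>{d \<in> D. h ` d \<in> U}"
      proof
        fix y
        assume "y \<in> g ` \<Union>U"
        then obtain e where e: "e \<in> U" "y \<in> g ` e"
          by blast
        then obtain d where d: "d \<in> D" "e = h ` d"
          using UhD by blast
        then show "y \<in> \<Union>{d \<in> D. h ` d \<in> U}"
          using e gh[OF d(1)] by blast
      qed
    qed
    moreover have "openin (top_of_set K) (g ` \<Union>U)"
      using homeomorphism_imp_open_map[OF homeomorphism_symD[OF hom] UT] .
    ultimately show ?thesis
      by (simp add: openin_decomp_topology[OF D(2)])
  qed
  moreover have "image h \<in> D \<rightarrow> image h ` D"
    by blast
  ultimately show ?thesis
    unfolding continuous_map_def topspace_decomp_topology[OF D(2,1)] topspace_decomp_topology[OF hD(2,1)]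
    by blast
qed

lemma decomp_topology_homeomorphic_image:
  assumes hom: "homeomorphism K T h g" and D: "\<Union>D = K" "disjoint D"
  shows "decomp_topology K D homeomorphic_space decomp_topology T (image h ` D)"
proof -
  note hD = partition_image_homeomorphism[OF hom D]
  have gh: "g ` h ` d = d" if "d \<in> D" for d
    using that D(1) by (intro image_image_homeomorphism_cancel[OF hom]) blast
  then have "image g ` image h ` D = D"
    by (simp add: image_image cong: image_cong)
  then have "continuous_map (decomp_topology T (image h ` D)) (decomp_topology K D) (image g)"
    using continuous_map_decomp_topology_image[OF homeomorphism_symD[OF hom] hD] by simp
  then have "homeomorphic_maps (decomp_topology K D) (decomp_topology T (image h ` D)) (image h) (image g)"
    unfolding homeomorphic_maps_def topspace_decomp_topology[OF D(2,1)] topspace_decomp_topology[OF hD(2,1)]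
    using continuous_map_decomp_topology_image[OF hom D] gh by auto
  then show ?thesis
    unfolding homeomorphic_space_def by blast
qed

lemma monotone_decomp_image:
  assumes M: "monotone_decomp K D" and hom: "homeomorphism K T h g"
  shows "monotone_decomp T (image h ` D)"
proof -
  note D = monotone_decompD(1,2)[OF M]
  note hD = partition_image_homeomorphism[OF hom D]
  have cont: "continuous_on K h" and hK: "h ` K = T"
    using hom by (simp_all add: homeomorphism_def)
  have "e \<noteq> {} \<and> compact e \<and> connected e" if "e \<in> image h ` D" for e
  proof -
    obtain d where d: "d \<in> D" "e = h ` d"
      using \<open>e \<in> image h ` D\<close> by blast
    then have "continuous_on d h"
      using D(1) cont continuous_on_subset by blast
    then show ?thesis
      using monotone_decompD(3)[OF M d(1)] d(2)
      by (blast intro: compact_continuous_image connected_continuous_image)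
  qed
  moreover have "openin (top_of_set T) (\<Union>{e \<in> image h ` D. e \<subseteq> U})"
    if U: "openin (top_of_set T) U" for U
  proof -
    define V where "V = K \<inter> h -` U"
    have "openin (top_of_set K) V"
      unfolding V_def using continuous_openin_preimage[OF cont _ U] hK by blast
    then have "openin (top_of_set K) (\<Union>{d \<in> D. d \<subseteq> V})"
      by (rule monotone_decompD(4)[OF M])
    moreover have "\<Union>{e \<in> image h ` D. e \<subseteq> U} = h ` \<Union>{d \<in> D. d \<subseteq> V}"
      using D(1) unfolding V_def by blast
    ultimately show ?thesis
      using homeomorphism_imp_open_map[OF hom] by simp
  qed
  ultimately show ?thesis
    using hD unfolding monotone_decomp_def disjoint_def by blast
qed

lemma finer_decomp_antisym:
  assumes "disjoint D" "{} \<notin> D" "disjoint E" "{} \<notin> E"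
    and "finer_decomp D E" "finer_decomp E D"
  shows "D = E"
proof -
  have sub: "A \<subseteq> B"
    if A: "disjoint A" "{} \<notin> A" and AB: "finer_decomp A B" "finer_decomp B A" for A B :: "'a set set"
  proof
    fix a
    assume "a \<in> A"
    then obtain b where b: "b \<in> B" "a \<subseteq> b"
      using AB(1) unfolding finer_decomp_def by blast
    then obtain a' where a': "a' \<in> A" "b \<subseteq> a'"
      using AB(2) unfolding finer_decomp_def by blast
    have "a \<noteq> {}"
      using \<open>a \<in> A\<close> A(2) by metis
    then have "a \<inter> a' \<noteq> {}"
      using b(2) a'(2) by blast
    then have "a = a'"
      using A(1) \<open>a \<in> A\<close> a'(1) unfolding disjoint_def by blast
    then have "a = b"
      using b(2) a'(2) by auto
    then show "a \<in> B"
      using b(1) by simp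
  qed
  show ?thesis
    using sub[OF assms(1,2,5,6)] sub[OF assms(3,4,6,5)] by (rule subset_antisym)
qed

lemma is_PS_decompD:
  assumes "is_PS_decomp K D"
  shows "monotone_decomp K D" and "peano_space (decomp_topology K D)"
    and "\<And>E. monotone_decomp K E \<Longrightarrow> peano_space (decomp_topology K E) \<Longrightarrow> finer_decomp D E"
  using assms unfolding is_PS_decomp_def by simp_all

lemma is_PS_decomp_unique:
  assumes D: "is_PS_decomp K D" and E: "is_PS_decomp K E"
  shows "D = E"
proof (rule finer_decomp_antisym)
  note MD = is_PS_decompD(1)[OF D] and ME = is_PS_decompD(1)[OF E]
  show "finer_decomp D E" "finer_decomp E D"
    using is_PS_decompD[OF D] is_PS_decompD[OF E] by simp_all
  show "disjoint D" "disjoint E"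
    using monotone_decompD(2)[OF MD] monotone_decompD(2)[OF ME] .
  show "{} \<notin> D" "{} \<notin> E"
    using monotone_decompD(3)[OF MD] monotone_decompD(3)[OF ME] by blast+
qed

lemma finer_decomp_image:
  assumes "finer_decomp D E"
  shows "finer_decomp (image h ` D) (image h ` E)"
  unfolding finer_decomp_def
proof
  fix d'
  assume "d' \<in> image h ` D"
  then obtain d where d: "d \<in> D" "d' = h ` d"
    by blast
  then obtain e where "e \<in> E" "d \<subseteq> e"
    using assms unfolding finer_decomp_def by blast
  then show "\<exists>e'\<in>image h ` E. d' \<subseteq> e'"
    using d(2) by (intro bexI[of _ "h ` e"] image_mono) auto
qed

lemma is_PS_decomp_image:
  assumes PS: "is_PS_decomp K D" and hom: "homeomorphism K T h g"
  shows "is_PS_decomp T (image h ` D)"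
proof -
  note M = is_PS_decompD(1)[OF PS] and P = is_PS_decompD(2)[OF PS]
  have hom': "homeomorphism T K g h"
    using homeomorphism_symD[OF hom] .
  have "finer_decomp (image h ` D) E"
    if ME: "monotone_decomp T E" and PE: "peano_space (decomp_topology T E)" for E
  proof -
    have "peano_space (decomp_topology K (image g ` E))"
      using peano_space_homeomorphic[OF PE]
        decomp_topology_homeomorphic_image[OF hom' monotone_decompD(1,2)[OF ME]] .
    then have "finer_decomp D (image g ` E)"
      by (rule is_PS_decompD(3)[OF PS monotone_decomp_image[OF ME hom']])
    then have "finer_decomp (image h ` D) (image h ` image g ` E)"
      by (rule finer_decomp_image)
    moreover have "h ` g ` e = e" if "e \<in> E" for e
      using that monotone_decompD(1)[OF ME] by (intro image_image_homeomorphism_cancel[OF hom']) blast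
    then have "image h ` image g ` E = E"
      by (simp add: image_image cong: image_cong)
    ultimately show ?thesis
      by simp
  qed
  moreover have "peano_space (decomp_topology T (image h ` D))"
    using peano_space_homeomorphic[OF P decomp_topology_homeomorphic_image[OF hom monotone_decompD(1,2)[OF M]]] .
  ultimately show ?thesis
    using monotone_decomp_image[OF M hom] by (simp add: is_PS_decomp_def)
qed

theorem theoremC:
  fixes K :: "(real^3) set" and h :: "real^3 \<Rightarrow> real^3"
    and D D' :: "(real^3) set set"
  assumes "compact K" and "K \<subseteq> riemann_sphere"
    and "continuous_on K h" and "inj_on h K" and "h ` K \<subseteq> riemann_sphere"
    and "is_PS_decomp K D" and "is_PS_decomp (h ` K) D'"
  shows "(\<forall>d\<in>D. h ` d \<in> D') \<and>
         decomp_topology K D homeomorphic_space decomp_topology (h ` K) D'"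
proof -
  obtain g where hom: "homeomorphism K (h ` K) h g"
    using homeomorphism_compact[OF assms(1,3) refl assms(4)] by blast
  have D': "D' = image h ` D"
    using is_PS_decomp_unique[OF assms(7) is_PS_decomp_image[OF assms(6) hom]] .
  have "decomp_topology K D homeomorphic_space decomp_topology (h ` K) (image h ` D)"
    using decomp_topology_homeomorphic_image[OF hom monotone_decompD(1,2)[OF is_PS_decompD(1)[OF assms(6)]]] .
  then show ?thesis
    unfolding D' by blast
qed

end
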